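(* Let $p$ be a prime, $\alpha\ge1$ and $\beta\ge0$. For every $p^\alpha$-periodic function $f:\mathbb{Z}\to\mathbb{Z}$ (equivalently $f:\mathbb{Z}_{p^\alpha}\to\mathbb{Z}$), $$p^\beta\ \text{ divides }\ \Delta^{(\beta(p-1)+1)p^{\alpha-1}}f(x)\quad\text{for all }x.$$
   Context: For a function $f$ on $\mathbb{Z}$ (or on $\mathbb{Z}_q$, viewed as a $q$-periodic function on $\mathbb{Z}$) with values in an additive group, the difference operator is $\Delta f(x):=f(x+1)-f(x)$, and $\Delta^k$ is its $k$-fold iterate. *)

theory Defs
  imports Main "HOL-Computational_Algebra.Primes"
begin

definition diff_op :: "(int \<Rightarrow> 'a::ab_group_add) \<Rightarrow> (int \<Rightarrow> 'a)" where
  "diff_op f = (\<lambda>x. f (x + 1) - f x)"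

definition diff_iter :: "nat \<Rightarrow> (int \<Rightarrow> 'a::ab_group_add) \<Rightarrow> (int \<Rightarrow> 'a)" where
  "diff_iter k f = (diff_op ^^ k) f"

end

theory Submission
  imports Defs "HOL-Computational_Algebra.Polynomial"
begin

text \<open>Let \<open>E\<close> be the shift \<open>g \<mapsto> g (\<cdot> + 1)\<close>, so that \<open>\<Delta> = E - 1\<close> and integer polynomials
  in \<open>E\<close> act on functions. Put \<open>q = p^(\<alpha>-1)\<close> and \<open>D = E^q - 1\<close>. The freshman's dream gives
  \<open>(E - 1)^q = D + p A\<close>, and \<open>(D + 1)^p = E^(p^\<alpha>)\<close> gives \<open>D^p \<equiv> p D B\<close> modulo \<open>M = E^(p^\<alpha>) - 1\<close>,
  which annihilates \<open>f\<close>. Hence \<open>D^(1 + k(p-1)) \<equiv> p^k D U (mod M)\<close>, and in the binomial expansion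
  of \<open>\<Delta>^((\<beta>(p-1)+1)q) = (p A + D)^(\<beta>(p-1)+1)\<close> every term is a multiple of \<open>p^\<beta>\<close> modulo \<open>M\<close>.\<close>

lemma add_power_prime_eq:
  fixes a b :: "'a::comm_ring_1"
  assumes "prime p"
  shows "\<exists>c. (a + b) ^ p = a ^ p + b ^ p + of_nat p * a * b * c"
proof -
  have p2: "p \<ge> 2" using assms prime_ge_2_nat by blast
  have split: "{..p} = insert 0 (insert p {1..<p})" using p2 by auto
  have "of_nat p * a * b dvd (\<Sum>k\<in>{1..<p}. of_nat (p choose k) * a ^ k * b ^ (p - k))"
  proof (rule dvd_sum)
    fix k assume k: "k \<in> {1..<p}"
    obtain m where m: "p choose k = p * m" using dvd_choose_prime[of k p] k assms by auto
    have "a ^ k = a * a ^ (k - 1)" "b ^ (p - k) = b * b ^ (p - k - 1)"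
      using k by (cases k; cases "p - k"; auto)+
    then have "of_nat (p choose k) * a ^ k * b ^ (p - k)
        = of_nat p * a * b * (of_nat m * a ^ (k - 1) * b ^ (p - k - 1))"
      by (simp add: m algebra_simps)
    then show "of_nat p * a * b dvd of_nat (p choose k) * a ^ k * b ^ (p - k)" by simp
  qed
  then obtain c where c: "(\<Sum>k\<in>{1..<p}. of_nat (p choose k) * a ^ k * b ^ (p - k)) = of_nat p * a * b * c"
    by (auto elim: dvdE)
  have "(a + b) ^ p = (\<Sum>k\<le>p. of_nat (p choose k) * a ^ k * b ^ (p - k))" by (rule binomial_ring)
  also have "\<dots> = b ^ p + (a ^ p + (\<Sum>k\<in>{1..<p}. of_nat (p choose k) * a ^ k * b ^ (p - k)))"
    unfolding split using p2 by simp
  finally show ?thesis using c by (auto simp: algebra_simps)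
qed

lemma prime_dvd_add_power_prime_power:
  fixes a b :: "'a::comm_ring_1"
  assumes "prime p"
  shows "of_nat p dvd (a + b) ^ (p ^ k) - a ^ (p ^ k) - b ^ (p ^ k)"
proof (induction k)
  case 0
  show ?case by simp
next
  case (Suc k)
  define u where "u = a ^ (p ^ k) + b ^ (p ^ k)"
  from Suc obtain c where c: "(a + b) ^ (p ^ k) = u + of_nat p * c"
    unfolding u_def by (auto elim!: dvdE simp: algebra_simps)
  obtain c1 where c1: "(u + of_nat p * c) ^ p = u ^ p + (of_nat p * c) ^ p + of_nat p * u * (of_nat p * c) * c1"
    using add_power_prime_eq[OF assms] by blast
  have pow: "y ^ (p ^ Suc k) = (y ^ (p ^ k)) ^ p" for y :: 'a
    by (simp only: power_Suc2 power_mult)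
  obtain c2 where c2: "u ^ p = a ^ (p ^ Suc k) + b ^ (p ^ Suc k) + of_nat p * a ^ (p ^ k) * b ^ (p ^ k) * c2"
    using add_power_prime_eq[OF assms, of "a ^ (p ^ k)" "b ^ (p ^ k)"] unfolding u_def pow by blast
  have "(a + b) ^ (p ^ Suc k) = ((a + b) ^ (p ^ k)) ^ p" by (rule pow)
  also have "\<dots> = u ^ p + (of_nat p * c) ^ p + of_nat p * u * (of_nat p * c) * c1"
    by (simp only: c c1)
  also have "\<dots> = a ^ (p ^ Suc k) + b ^ (p ^ Suc k)
      + ((of_nat p * c) ^ p + of_nat p * (u * (of_nat p * c) * c1 + a ^ (p ^ k) * b ^ (p ^ k) * c2))"
    by (simp only: c2) (simp add: algebra_simps)
  finally have "(a + b) ^ (p ^ Suc k) - a ^ (p ^ Suc k) - b ^ (p ^ Suc k)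
      = (of_nat p * c) ^ p + of_nat p * (u * (of_nat p * c) * c1 + a ^ (p ^ k) * b ^ (p ^ k) * c2)"
    by simp
  moreover have "of_nat p dvd (of_nat p * c :: 'a) ^ p"
    using dvd_trans[OF dvd_triv_left dvd_power] assms prime_gt_0_nat by blast
  ultimately show ?case by simp
qed

lemma prime_dvd_diff_one_power_prime_power:
  fixes x :: "'a::comm_ring_1"
  assumes "prime p"
  shows "of_nat p dvd (x - 1) ^ (p ^ k) - (x ^ (p ^ k) - 1)"
proof -
  \<comment> \<open>\<open>(-1)^(p^k) \<equiv> -1 (mod p)\<close> without a parity case split: expand \<open>(1 + (-1))^(p^k) = 0\<close>.\<close>
  have "of_nat p dvd (1 + (-1 :: 'a)) ^ (p ^ k) - 1 ^ (p ^ k) - (-1) ^ (p ^ k)"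
    using prime_dvd_add_power_prime_power[OF assms] .
  moreover have "(1 + (-1 :: 'a)) ^ (p ^ k) = 0"
    using assms prime_gt_0_nat by (simp add: power_0_left)
  ultimately have "of_nat p dvd - (1 + (-1 :: 'a) ^ (p ^ k))"
    by (simp add: algebra_simps)
  then have "of_nat p dvd (1 + (-1 :: 'a) ^ (p ^ k))" by (simp only: dvd_minus_iff)
  moreover have "of_nat p dvd (x + - 1) ^ (p ^ k) - x ^ (p ^ k) - (-1) ^ (p ^ k)"
    using prime_dvd_add_power_prime_power[OF assms] .
  ultimately have "of_nat p dvd ((x + - 1) ^ (p ^ k) - x ^ (p ^ k) - (-1) ^ (p ^ k)) + (1 + (-1) ^ (p ^ k))"
    by (simp only: dvd_add)
  then show ?thesis by (simp add: algebra_simps)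
qed

lemma power_reduction_mod:
  fixes D M B :: "'a::comm_ring_1"
  assumes "p \<ge> 1" and DB: "M dvd D ^ p - of_nat p * D * B"
  shows "\<exists>U. M dvd D ^ (1 + k * (p - 1)) - of_nat p ^ k * D * U"
proof (induction k)
  case 0
  show ?case by (rule exI[of _ 1]) simp
next
  case (Suc k)
  then obtain U where U: "M dvd D ^ (1 + k * (p - 1)) - of_nat p ^ k * D * U" by blast
  have DD: "D ^ (1 + Suc k * (p - 1)) = D ^ (1 + k * (p - 1)) * D ^ (p - 1)"
    by (simp add: power_add)
  have Dp: "D ^ p = D * D ^ (p - 1)"
    using \<open>p \<ge> 1\<close> by (cases p) auto
  have "D ^ (1 + Suc k * (p - 1)) - of_nat p ^ Suc k * D * (U * B)
      = (D ^ (1 + k * (p - 1)) - of_nat p ^ k * D * U) * D ^ (p - 1)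
        + of_nat p ^ k * U * (D ^ p - of_nat p * D * B)"
    unfolding DD Dp by (simp add: algebra_simps)
  also have "M dvd \<dots>"
    using U DB by (simp add: dvd_add dvd_mult2 dvd_mult)
  finally show ?case by blast
qed

lemma binomial_power_reduction_mod:
  fixes D M B A :: "'a::comm_ring_1"
  assumes p: "p \<ge> 2" and DB: "M dvd D ^ p - of_nat p * D * B"
  shows "\<exists>S. M dvd (of_nat p * A + D) ^ (\<beta> * (p - 1) + 1) - of_nat p ^ \<beta> * S"
proof -
  define m where "m = \<beta> * (p - 1) + 1"
  have "\<exists>S. M dvd of_nat (m choose k) * (of_nat p * A) ^ k * D ^ (m - k) - of_nat p ^ \<beta> * S" for k
  proof (cases "\<beta> \<le> k")
    case True
    then have "(of_nat p :: 'a) ^ k = of_nat p ^ \<beta> * of_nat p ^ (k - \<beta>)"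
      by (simp flip: power_add)
    then have "of_nat (m choose k) * (of_nat p * A) ^ k * D ^ (m - k)
        = of_nat p ^ \<beta> * (of_nat (m choose k) * of_nat p ^ (k - \<beta>) * A ^ k * D ^ (m - k))"
      by (simp add: power_mult_distrib algebra_simps)
    then show ?thesis by (metis dvd_0_right diff_self)
  next
    case False
    \<comment> \<open>the binomial factor \<open>p^k\<close> is made up to \<open>p^\<beta>\<close> by the reduction of \<open>D^(1 + (\<beta>-k)(p-1))\<close>\<close>
    obtain U where U: "M dvd D ^ (1 + (\<beta> - k) * (p - 1)) - of_nat p ^ (\<beta> - k) * D * U"
      using power_reduction_mod[OF _ DB] p by fastforce
    have mk: "m - k = (1 + (\<beta> - k) * (p - 1)) + k * (p - 2)"
    proof -
      have "\<beta> * (p - 1) = (\<beta> - k) * (p - 1) + k * (p - 1)"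
        using False by (simp flip: add_mult_distrib)
      moreover have "p - 1 = Suc (p - 2)" using p by simp
      ultimately show ?thesis unfolding m_def by simp
    qed
    have pk: "(of_nat p :: 'a) ^ k * of_nat p ^ (\<beta> - k) = of_nat p ^ \<beta>"
      using False by (simp flip: power_add)
    have "of_nat (m choose k) * (of_nat p * A) ^ k * D ^ (m - k)
        - of_nat p ^ \<beta> * (of_nat (m choose k) * A ^ k * D * U * D ^ (k * (p - 2)))
        = of_nat (m choose k) * (of_nat p * A) ^ k * D ^ (k * (p - 2))
          * (D ^ (1 + (\<beta> - k) * (p - 1)) - of_nat p ^ (\<beta> - k) * D * U)"
      unfolding mk power_add pk[symmetric] by (simp add: power_mult_distrib algebra_simps)
    then show ?thesis using U by (metis dvd_mult)
  qed
  then obtain S where S: "\<And>k. M dvd of_nat (m choose k) * (of_nat p * A) ^ k * D ^ (m - k) - of_nat p ^ \<beta> * S k"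
    by metis
  have "(of_nat p * A + D) ^ m - of_nat p ^ \<beta> * (\<Sum>k\<le>m. S k)
      = (\<Sum>k\<le>m. of_nat (m choose k) * (of_nat p * A) ^ k * D ^ (m - k) - of_nat p ^ \<beta> * S k)"
    by (simp add: binomial_ring sum_subtractf sum_distrib_left)
  also have "M dvd \<dots>" using S by (simp add: dvd_sum)
  finally show ?thesis unfolding m_def by blast
qed

text \<open>\<open>poly_shift P g = P(E) g\<close> for the shift \<open>E g = g (\<cdot> + 1)\<close>.\<close>
definition poly_shift :: "'a::comm_ring_1 poly \<Rightarrow> (int \<Rightarrow> 'a) \<Rightarrow> int \<Rightarrow> 'a" where
  "poly_shift P g x = (\<Sum>i\<le>degree P. coeff P i * g (x + int i))"

lemma poly_shift_eq_sum:
  assumes "degree P < n"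
  shows "poly_shift P g x = (\<Sum>i<n. coeff P i * g (x + int i))"
  unfolding poly_shift_def using assms
  by (intro sum.mono_neutral_left) (auto simp: coeff_eq_0)

lemma poly_shift_0 [simp]: "poly_shift 0 g x = 0"
  by (simp add: poly_shift_def)

lemma poly_shift_zero_fun [simp]: "poly_shift P (\<lambda>_. 0) x = 0"
  by (simp add: poly_shift_def)

lemma poly_shift_add: "poly_shift (P + Q) g x = poly_shift P g x + poly_shift Q g x"
proof -
  define n where "n = Suc (max (degree P) (degree Q))"
  have "degree (P + Q) < n" "degree P < n" "degree Q < n"
    unfolding n_def using degree_add_le_max[of P Q] by auto
  then show ?thesis by (simp add: poly_shift_eq_sum sum.distrib distrib_right)
qed

lemma poly_shift_diff: "poly_shift (P - Q) g x = poly_shift P g x - poly_shift Q g x"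
  using poly_shift_add[of "P - Q" Q g x] by simp

lemma poly_shift_smult: "poly_shift (smult a P) g x = a * poly_shift P g x"
proof -
  have "degree (smult a P) < Suc (degree P)" "degree P < Suc (degree P)"
    using degree_smult_le[of a P] by auto
  then show ?thesis
    by (simp only: poly_shift_eq_sum) (simp add: sum_distrib_left mult.assoc del: sum.lessThan_Suc)
qed

lemma poly_shift_pCons: "poly_shift (pCons a P) g x = a * g x + poly_shift P g (x + 1)"
proof -
  define n where "n = Suc (degree P)"
  have "degree (pCons a P) < Suc n" "degree P < n"
    unfolding n_def using degree_pCons_le[of a P] by auto
  then show ?thesis
    by (simp only: poly_shift_eq_sum sum.lessThan_Suc_shift) (simp add: add_ac)
qed

lemma poly_shift_mult: "poly_shift (P * Q) g x = poly_shift P (poly_shift Q g) x"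
proof (induction P arbitrary: x)
  case 0
  then show ?case by simp
next
  case (pCons a P)
  then show ?case by (simp add: poly_shift_add poly_shift_smult poly_shift_pCons)
qed

lemma poly_shift_monom_1: "poly_shift (monom 1 n) g x = g (x + int n)"
proof -
  have "degree (monom 1 n :: 'a poly) < Suc n" using degree_monom_le le_imp_less_Suc by blast
  then show ?thesis by (simp add: poly_shift_eq_sum if_distrib cong: if_cong)
qed

lemma diff_iter_eq_poly_shift: "diff_iter k f = poly_shift ([:-1, 1:] ^ k) f"
proof (induction k)
  case 0
  show ?case using poly_shift_monom_1[of 0 f] by (simp add: diff_iter_def fun_eq_iff)
next
  case (Suc k)
  have "poly_shift ([:-1, 1:] ^ Suc k) f x
      = poly_shift ([:-1, 1:] ^ k) f (x + 1) - poly_shift ([:-1, 1:] ^ k) f x" for x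
    by (simp only: power_Suc poly_shift_mult) (simp add: poly_shift_pCons)
  moreover have "diff_iter (Suc k) f = diff_op (diff_iter k f)" by (simp add: diff_iter_def)
  ultimately show ?case by (simp add: Suc diff_op_def fun_eq_iff)
qed

lemma poly_shift_periodic:
  assumes "\<And>x. f (x + int N) = f x"
  shows "poly_shift (monom 1 N - 1) f x = 0"
  using poly_shift_monom_1[of N f x] poly_shift_monom_1[of 0 f x]
  by (simp add: poly_shift_diff assms)

lemma difference_poly_power_decomposition:
  assumes "prime p" and "\<alpha> \<ge> 1"
  shows "\<exists>S T. ([:-1, 1:] :: 'a::comm_ring_1 poly) ^ ((\<beta> * (p - 1) + 1) * p ^ (\<alpha> - 1))
           = smult (of_nat (p ^ \<beta>)) S + T * (monom 1 (p ^ \<alpha>) - 1)"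
proof -
  define q where "q = p ^ (\<alpha> - 1)"
  define D :: "'a poly" where "D = monom 1 q - 1"
  define M :: "'a poly" where "M = monom 1 (p ^ \<alpha>) - 1"
  have qp: "q * p = p ^ \<alpha>"
    unfolding q_def using assms(2) by (simp flip: power_Suc2)
  obtain c where "(D + 1) ^ p = D ^ p + 1 ^ p + of_nat p * D * 1 * c"
    using add_power_prime_eq[OF assms(1)] by blast
  moreover have "(D + 1) ^ p = monom 1 (p ^ \<alpha>)"
    unfolding D_def by (simp add: monom_power qp)
  ultimately have "D ^ p - of_nat p * D * (- c) = M"
    unfolding M_def by (simp add: algebra_simps)
  then have DB: "M dvd D ^ p - of_nat p * D * (- c)" by simp
  have "[:-1, 1:] = monom (1 :: 'a) 1 - 1"
    by (simp add: monom_Suc monom_0 one_pCons)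
  moreover have "of_nat p dvd (monom (1 :: 'a) 1 - 1) ^ q - D"
    using prime_dvd_diff_one_power_prime_power[OF assms(1), of "monom 1 1" "\<alpha> - 1"]
    unfolding q_def D_def by (simp add: monom_power)
  ultimately obtain A where A: "[:-1, 1:] ^ q = of_nat p * A + D"
    by (auto elim!: dvdE simp: algebra_simps)
  obtain S where "M dvd (of_nat p * A + D) ^ (\<beta> * (p - 1) + 1) - of_nat p ^ \<beta> * S"
    using binomial_power_reduction_mod[OF _ DB] prime_ge_2_nat[OF assms(1)] by blast
  then obtain T where "(of_nat p * A + D) ^ (\<beta> * (p - 1) + 1) - of_nat p ^ \<beta> * S = M * T"
    by (elim dvdE)
  then have ST: "(of_nat p * A + D) ^ (\<beta> * (p - 1) + 1) = of_nat p ^ \<beta> * S + T * M"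
    by (metis diff_eq_eq add.commute mult.commute)
  have "[:-1, 1:] ^ ((\<beta> * (p - 1) + 1) * q) = ([:-1, 1:] ^ q) ^ (\<beta> * (p - 1) + 1)"
    by (simp only: mult.commute[of _ q] power_mult)
  also have "\<dots> = of_nat p ^ \<beta> * S + T * M" by (simp only: A ST)
  also have "of_nat p ^ \<beta> * S = smult (of_nat (p ^ \<beta>)) S"
    by (simp only: of_nat_power[symmetric] of_nat_poly[of "p ^ \<beta>"]) simp
  finally have "[:-1, 1:] ^ ((\<beta> * (p - 1) + 1) * q) = smult (of_nat (p ^ \<beta>)) S + T * M" .
  then show ?thesis unfolding q_def M_def by blast
qed

theorem theorem3p4:
  fixes p \<alpha> \<beta> :: nat and f :: "int \<Rightarrow> int"
  assumes "prime p" and "\<alpha> \<ge> 1"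
    and "\<And>x. f (x + int (p ^ \<alpha>)) = f x"
  shows "\<forall>x. int (p ^ \<beta>) dvd diff_iter ((\<beta> * (p - 1) + 1) * p ^ (\<alpha> - 1)) f x"
proof
  fix x
  obtain S T where ST: "([:-1, 1:] :: int poly) ^ ((\<beta> * (p - 1) + 1) * p ^ (\<alpha> - 1))
      = smult (of_nat (p ^ \<beta>)) S + T * (monom 1 (p ^ \<alpha>) - 1)"
    using difference_poly_power_decomposition[OF assms(1,2)] by blast
  have "poly_shift (monom 1 (p ^ \<alpha>) - 1) f = (\<lambda>_. 0)"
    using poly_shift_periodic[of f "p ^ \<alpha>"] assms(3) by auto
  then have "diff_iter ((\<beta> * (p - 1) + 1) * p ^ (\<alpha> - 1)) f x = int (p ^ \<beta>) * poly_shift S f x"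
    unfolding diff_iter_eq_poly_shift ST by (simp add: poly_shift_add poly_shift_smult poly_shift_mult)
  then show "int (p ^ \<beta>) dvd diff_iter ((\<beta> * (p - 1) + 1) * p ^ (\<alpha> - 1)) f x" by simp
qed

end
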